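(* Let $x\in\mathbb R^d$ and $q\in\mathcal C$ be such that the segment $\overline{xq}$ does not intersect the medial axis $\mathcal M$, and let $p=\mathrm{cl}(x)$. Then $p$ and $q$ lie in the same connected component of $\mathcal C$, and for a fixed orientation of that component, the interior of $B_x(d(x,q))$ contains either $[p,q)$ or $(q,p]$.
   Context: $\mathcal C\subset\mathbb R^d$ ($d\ge2$) is a finite union of pairwise disjoint closed curves (images of injective continuous maps $S^1\to\mathbb R^d$). $d(x,y)$ is Euclidean distance, $B_x(r)$ the closed ball of radius $r$ about $x$, $\overline{xy}$ the closed segment. The medial axis $\mathcal M$ is the set of points with no unique closest point in $\mathcal C$; $\mathrm{cl}(x)$ is the unique closest point of $\mathcal C$ to $x\notin\mathcal M$. For $p,q$ in the same component with a fixed orientation, $[p,q]$ is $\{p\}$ if $p=q$ and otherwise the arc of $\mathcal C$ from $p$ to $q$ traversed following the orientation; $[p,q)$, $(q,p]$ etc. denote the corresponding arcs with the indicated endpoints removed. *)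

theory Defs
  imports "HOL-Analysis.Analysis"
begin

definition is_closest :: "'a::metric_space set \<Rightarrow> 'a \<Rightarrow> 'a \<Rightarrow> bool" where
  "is_closest C y c \<longleftrightarrow> c \<in> C \<and> (\<forall>c'\<in>C. dist y c \<le> dist y c')"

definition medial_axis :: "'a::metric_space set \<Rightarrow> 'a set" where
  "medial_axis C = {y. \<not> (\<exists>!c. is_closest C y c)}"

definition cl :: "'a::metric_space set \<Rightarrow> 'a \<Rightarrow> 'a" where
  "cl C y = (THE c. is_closest C y c)"

text \<open>A simple closed curve: image of an injective continuous map from the circle,
  represented as a simple loop \<open>g : [0,1] \<rightarrow> R^d\<close> with \<open>g 0 = g 1\<close>.
  The parametrisation fixes the orientation.\<close>

definition simple_loop :: "(real \<Rightarrow> 'a::topological_space) \<Rightarrow> bool" where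
  "simple_loop g \<longleftrightarrow> simple_path g \<and> pathfinish g = pathstart g"

definition loop_param :: "(real \<Rightarrow> 'a) \<Rightarrow> 'a \<Rightarrow> real" where
  "loop_param g p = (THE s. s \<in> {0..<1} \<and> g s = p)"

text \<open>The closed arc \<open>[p,q]\<close> traversed following the orientation of \<open>g\<close>;
  equals \<open>{p}\<close> when \<open>p = q\<close>.\<close>
definition closed_arc :: "(real \<Rightarrow> 'a) \<Rightarrow> 'a \<Rightarrow> 'a \<Rightarrow> 'a set" where
  "closed_arc g p q =
     (let s = loop_param g p; t = loop_param g q in
      if s \<le> t then g ` {s..t} else g ` ({s..1} \<union> {0..t}))"

definition arc_co :: "(real \<Rightarrow> 'a) \<Rightarrow> 'a \<Rightarrow> 'a \<Rightarrow> 'a set" where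
  "arc_co g p q = closed_arc g p q - {q}"

definition arc_oc :: "(real \<Rightarrow> 'a) \<Rightarrow> 'a \<Rightarrow> 'a \<Rightarrow> 'a set" where
  "arc_oc g p q = closed_arc g p q - {p}"

end

theory Submission
  imports Defs
begin

text \<open>As \<open>y\<close> runs along \<open>\<overline>xq\<close>, which avoids the medial axis, the closest point \<open>cl y\<close> moves
  continuously from \<open>p = cl x\<close> to \<open>cl q = q\<close>, so its trace \<open>K\<close> is a connected subset of \<open>\<C>\<close>
  joining \<open>p\<close> and \<open>q\<close>. If \<open>cl y \<noteq> q\<close> then \<open>d(x, cl y) \<le> d(x,y) + d(y, cl y) < d(x,y) + d(y,q) = d(x,q)\<close>,
  the strict inequality by uniqueness of the closest point; hence \<open>K - {q}\<close> lies in the open ball.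
  Finally a connected subset of a simple closed curve containing \<open>p\<close> and \<open>q\<close> contains one of
  the two arcs between them.\<close>

lemma is_closest_cl:
  assumes "y \<notin> medial_axis C"
  shows "is_closest C y (cl C y)"
proof -
  have "\<exists>!c. is_closest C y c" using assms unfolding medial_axis_def by blast
  then show ?thesis unfolding cl_def by (rule theI')
qed

lemma cl_unique:
  assumes "y \<notin> medial_axis C" and "is_closest C y c"
  shows "cl C y = c"
  using assms is_closest_cl unfolding medial_axis_def by blast

lemma cl_of_mem:
  assumes "c \<in> C"
  shows "c \<notin> medial_axis C" and "cl C c = c"
proof -
  have "is_closest C c c" using assms unfolding is_closest_def by simp
  moreover have "c' = c" if "is_closest C c c'" for c'
    using that assms unfolding is_closest_def by (metis dist_le_zero_iff dist_self)
  ultimately show "c \<notin> medial_axis C" unfolding medial_axis_def by blast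
  then show "cl C c = c" using \<open>is_closest C c c\<close> by (rule cl_unique)
qed

text \<open>The graph of \<open>cl\<close> is cut out by the closed conditions \<open>d(y,c) \<le> d(y,c')\<close>, so continuity
  follows from the closed graph theorem for maps into a compact set.\<close>

lemma continuous_on_cl:
  fixes C :: "'a::euclidean_space set"
  assumes "compact C" and "S \<inter> medial_axis C = {}"
  shows "continuous_on S (cl C)"
proof -
  have cl_S: "is_closest C y (cl C y)" if "y \<in> S" for y
    using that assms(2) is_closest_cl by blast
  have graph: "(\<lambda>y. (y, cl C y)) ` S =
      (S \<times> C) \<inter> (\<Inter>c'\<in>C. {z. dist (fst z) (snd z) \<le> dist (fst z) c'})"
  proof (intro equalityI subsetI)
    fix z assume "z \<in> (S \<times> C) \<inter> (\<Inter>c'\<in>C. {z. dist (fst z) (snd z) \<le> dist (fst z) c'})"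
    then obtain y c where "z = (y, c)" "y \<in> S" "is_closest C y c"
      unfolding is_closest_def by force
    then show "z \<in> (\<lambda>y. (y, cl C y)) ` S"
      using assms(2) cl_unique by fastforce
  qed (use cl_S in \<open>auto simp: is_closest_def\<close>)
  have "closedin (top_of_set (S \<times> C)) ((\<lambda>y. (y, cl C y)) ` S)"
    unfolding graph
    by (intro closedin_closed_Int closed_INT ballI closed_Collect_le continuous_intros)
  moreover have "cl C \<in> S \<rightarrow> C" using cl_S unfolding is_closest_def by blast
  ultimately show ?thesis using continuous_closed_graph_eq[OF assms(1)] by blast
qed

lemma dist_cl_segment_less:
  fixes x q :: "'a::euclidean_space"
  assumes "y \<in> closed_segment x q" and "q \<in> C" and "y \<notin> medial_axis C"
    and "cl C y \<noteq> q"
  shows "dist x (cl C y) < dist x q"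
proof (rule ccontr)
  assume not_less: "\<not> ?thesis"
  have "dist x q = dist x y + dist y q"
    using assms(1) between_mem_segment between[of x q y] by auto
  moreover have "dist y (cl C y) \<le> dist y q"
    using is_closest_cl[OF assms(3)] assms(2) unfolding is_closest_def by blast
  moreover have "dist x (cl C y) \<le> dist x y + dist y (cl C y)" by (rule dist_triangle)
  ultimately have "dist y q = dist y (cl C y)" using not_less by linarith
  then have "is_closest C y q"
    using is_closest_cl[OF assms(3)] assms(2) unfolding is_closest_def by simp
  then show False using cl_unique[OF assms(3)] assms(4) by blast
qed

lemma simple_loop_inj_on:
  assumes "simple_loop g"
  shows "inj_on g {0..<1}"
  using assms unfolding simple_loop_def simple_path_def loop_free_def inj_on_def by force

lemma loop_param_of:
  assumes "simple_loop g" and "w \<in> {0..<1}"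
  shows "loop_param g (g w) = w"
  unfolding loop_param_def
  by (rule the_equality) (use assms inj_onD[OF simple_loop_inj_on[OF assms(1)]] in auto)

lemma loop_param_in_path_image:
  assumes "simple_loop g" and "y \<in> path_image g"
  shows "loop_param g y \<in> {0..<1}" and "g (loop_param g y) = y"
proof -
  have "g 1 = g 0"
    using assms(1) unfolding simple_loop_def pathfinish_def pathstart_def by simp
  obtain w where w: "w \<in> {0..1}" "y = g w" using assms(2) unfolding path_image_def by blast
  then have "(if w = 1 then 0 else w) \<in> {0..<1}" "y = g (if w = 1 then 0 else w)"
    using \<open>g 1 = g 0\<close> by auto
  then show "loop_param g y \<in> {0..<1}" and "g (loop_param g y) = y"
    using loop_param_of[OF assms(1)] by simp_all
qed

lemma closed_arc_subset_path_image:
  assumes "simple_loop g" and "p \<in> path_image g" and "q \<in> path_image g"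
  shows "closed_arc g p q \<subseteq> path_image g"
proof -
  have "loop_param g p \<in> {0..<1}" "loop_param g q \<in> {0..<1}"
    using loop_param_in_path_image(1)[OF assms(1)] assms(2,3) by auto
  then have "{loop_param g p..loop_param g q} \<subseteq> {0..1}"
    "{loop_param g p..1} \<union> {0..loop_param g q} \<subseteq> {0..1}" by auto
  then show ?thesis unfolding closed_arc_def Let_def path_image_def by (simp add: image_mono)
qed

lemma loop_param_mem_closed_arc:
  assumes g: "simple_loop g" and "p \<in> path_image g" and "q \<in> path_image g"
    and y: "y \<in> closed_arc g p q"
  shows "loop_param g p \<le> loop_param g q \<Longrightarrow>
           loop_param g p \<le> loop_param g y \<and> loop_param g y \<le> loop_param g q"
    and "loop_param g q < loop_param g p \<Longrightarrow>
           loop_param g p \<le> loop_param g y \<or> loop_param g y \<le> loop_param g q"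
proof -
  define s t r where "s = loop_param g p" and "t = loop_param g q" and "r = loop_param g y"
  have st: "s \<in> {0..<1}" "t \<in> {0..<1}"
    using loop_param_in_path_image(1)[OF g] assms(2,3) unfolding s_def t_def by auto
  have param_g: "r = (if w = 1 then 0 else w)" if "y = g w" "w \<in> {0..1}" for w
  proof (cases "w = 1")
    case True
    then show ?thesis using that loop_param_of[OF g, of 0] g
      unfolding r_def simple_loop_def pathfinish_def pathstart_def by simp
  qed (use that loop_param_of[OF g, of w] r_def in auto)
  have "if s \<le> t then s \<le> r \<and> r \<le> t else s \<le> r \<or> r \<le> t"
  proof (cases "s \<le> t")
    case True
    then obtain w where "w \<in> {s..t}" "y = g w"
      using y unfolding closed_arc_def Let_def s_def t_def by auto
    then show ?thesis using True st param_g[of w] by auto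
  next
    case False
    then have "y \<in> g ` ({s..1} \<union> {0..t})"
      using y unfolding closed_arc_def Let_def s_def t_def by simp
    then obtain w where "w \<in> {s..1} \<union> {0..t}" "y = g w" by blast
    then show ?thesis using False st param_g[of w] by auto
  qed
  then show "s \<le> t \<Longrightarrow> s \<le> r \<and> r \<le> t" and "t < s \<Longrightarrow> s \<le> r \<or> r \<le> t"
    by (simp_all split: if_splits)
qed

text \<open>The closed arcs \<open>g ` [u,v]\<close> and \<open>g ` ([v,1] \<union> [0,u])\<close> cover the loop and, the loop being
  simple, meet only in \<open>g u\<close> and \<open>g v\<close>; so they separate every connected set avoiding these points.\<close>

lemma connected_subset_loop_same_side:
  fixes g :: "real \<Rightarrow> 'a::t2_space"
  assumes g: "simple_loop g" and K: "K \<subseteq> path_image g" "connected K"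
    and uv: "0 \<le> u" "u < v" "v < 1" and nK: "g u \<notin> K" "g v \<notin> K"
    and w1: "w1 \<in> {0..<1}" "g w1 \<in> K" and w2: "w2 \<in> {0..<1}" "g w2 \<in> K"
  shows "w1 \<in> {u<..<v} \<longleftrightarrow> w2 \<in> {u<..<v}"
proof -
  have pg: "path g" and lf: "loop_free g"
    using g unfolding simple_loop_def simple_path_def by simp_all
  define F1 F2 where "F1 = g ` {u..v}" and "F2 = g ` ({v..1} \<union> {0..u})"
  have closed: "closed F1" "closed F2" unfolding F1_def F2_def
    by (intro compact_imp_closed compact_continuous_image compact_Un compact_Icc
          continuous_on_subset[OF pg[unfolded path_def]]; use uv in auto)+
  have cover: "K \<subseteq> F1 \<union> F2"
    using K(1) unfolding F1_def F2_def path_image_def by force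
  have disjoint: "F1 \<inter> F2 \<inter> K = {}"
  proof (rule ccontr)
    assume "F1 \<inter> F2 \<inter> K \<noteq> {}"
    then obtain a b where ab: "g a \<in> K" "a \<in> {u..v}" "b \<in> {v..1} \<union> {0..u}" "g a = g b"
      unfolding F1_def F2_def by blast
    moreover have "a \<in> {0..1}" "b \<in> {0..1}" using ab uv by auto
    ultimately have "a = b \<or> a = 0 \<and> b = 1 \<or> a = 1 \<and> b = 0"
      using lf unfolding loop_free_def by blast
    then have "a = u \<or> a = v" using ab uv by auto
    then show False using ab nK by auto
  qed
  have "F1 \<inter> K = {} \<or> F2 \<inter> K = {}"
    by (rule connected_closedD[OF K(2) disjoint cover closed])
  moreover have "g w \<in> F1" if "w \<in> {u<..<v}" for w using that unfolding F1_def by auto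
  moreover have "g w \<in> F2" if "w \<in> {0..<1}" "w \<notin> {u<..<v}" for w
    using that unfolding F2_def by auto
  ultimately show ?thesis using w1 w2 by blast
qed

text \<open>Otherwise there are \<open>a \<in> [p,q] - K\<close> and \<open>b \<in> [q,p] - K\<close>, whose parameters separate those of
  \<open>p\<close> and \<open>q\<close> on the circle.\<close>

lemma connected_subset_loop_contains_arc:
  fixes g :: "real \<Rightarrow> 'a::t2_space"
  assumes g: "simple_loop g" and K: "K \<subseteq> path_image g" "connected K"
    and pq: "p \<in> K" "q \<in> K"
  shows "closed_arc g p q \<subseteq> K \<or> closed_arc g q p \<subseteq> K"
proof (rule ccontr)
  assume "\<not> ?thesis"
  then obtain a b where a: "a \<in> closed_arc g p q" "a \<notin> K"
    and b: "b \<in> closed_arc g q p" "b \<notin> K"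
    by auto
  have pq_img: "p \<in> path_image g" "q \<in> path_image g" using pq K by auto
  have ab_img: "a \<in> path_image g" "b \<in> path_image g"
    using closed_arc_subset_path_image[OF g] pq_img a b by blast+
  define s t \<alpha> \<beta> where "s = loop_param g p" and "t = loop_param g q"
    and "\<alpha> = loop_param g a" and "\<beta> = loop_param g b"
  note param = loop_param_in_path_image[OF g]
  have range: "s \<in> {0..<1}" "t \<in> {0..<1}" "\<alpha> \<in> {0..<1}" "\<beta> \<in> {0..<1}"
    using param(1) pq_img ab_img unfolding s_def t_def \<alpha>_def \<beta>_def by auto
  have pts: "g s = p" "g t = q" "g \<alpha> = a" "g \<beta> = b"
    using param(2) pq_img ab_img unfolding s_def t_def \<alpha>_def \<beta>_def by auto
  have A: "s \<le> t \<Longrightarrow> s \<le> \<alpha> \<and> \<alpha> \<le> t" "t < s \<Longrightarrow> s \<le> \<alpha> \<or> \<alpha> \<le> t"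
    using loop_param_mem_closed_arc[OF g pq_img a(1)] unfolding s_def t_def \<alpha>_def by auto
  have B: "t \<le> s \<Longrightarrow> t \<le> \<beta> \<and> \<beta> \<le> s" "s < t \<Longrightarrow> t \<le> \<beta> \<or> \<beta> \<le> s"
    using loop_param_mem_closed_arc[OF g pq_img(2,1) b(1)] unfolding s_def t_def \<beta>_def
    by auto
  have ne: "\<alpha> \<noteq> s" "\<alpha> \<noteq> t" "\<beta> \<noteq> s" "\<beta> \<noteq> t"
    using pts a b pq by metis+
  then have "\<alpha> \<noteq> \<beta>" using A B by (cases "s < t") auto
  have out: "g \<alpha> \<notin> K" "g \<beta> \<notin> K" using pts a b by auto
  have same_side: "s \<in> {u<..<v} \<longleftrightarrow> t \<in> {u<..<v}"
    if "u < v" "g u \<notin> K" "g v \<notin> K" "u \<in> {0..<1}" "v \<in> {0..<1}" for u v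
    by (rule connected_subset_loop_same_side[OF g K]) (use that range pts pq in auto)
  consider "\<alpha> < \<beta>" | "\<beta> < \<alpha>" using \<open>\<alpha> \<noteq> \<beta>\<close> by linarith
  then show False
  proof cases
    case 1
    then show False using same_side[OF 1 out range(3,4)] A B ne by (cases "s < t") auto
  next
    case 2
    then show False using same_side[OF 2 out(2,1) range(4,3)] A B ne by (cases "s < t") auto
  qed
qed

theorem lemma3p3:
  fixes \<Gamma> :: "(real \<Rightarrow> 'a::euclidean_space) set"
    and C :: "'a set" and x q :: 'a
  assumes dim: "DIM('a) \<ge> 2"
    and fin: "finite \<Gamma>"
    and loops: "\<And>g. g \<in> \<Gamma> \<Longrightarrow> simple_loop g"
    and disj: "\<And>g h. g \<in> \<Gamma> \<Longrightarrow> h \<in> \<Gamma> \<Longrightarrow> g \<noteq> h \<Longrightarrow>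
                  path_image g \<inter> path_image h = {}"
    and C_def: "C = (\<Union>g\<in>\<Gamma>. path_image g)"
    and qC: "q \<in> C"
    and seg: "closed_segment x q \<inter> medial_axis C = {}"
  shows "connected_component C (cl C x) q \<and>
         (\<forall>g. simple_loop g \<and> path_image g = connected_component_set C (cl C x) \<longrightarrow>
              arc_co g (cl C x) q \<subseteq> interior (cball x (dist x q)) \<or>
              arc_oc g q (cl C x) \<subseteq> interior (cball x (dist x q)))"
proof -
  define K where "K = cl C ` closed_segment x q"
  have off_axis: "y \<notin> medial_axis C" if "y \<in> closed_segment x q" for y
    using seg that by blast
  have "compact C" unfolding C_def using fin loops
    by (intro compact_UN compact_path_image) (auto simp: simple_loop_def simple_path_def)
  then have conn: "connected K" unfolding K_def
    by (rule connected_continuous_image[OF continuous_on_cl[OF _ seg] connected_segment])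
  have KC: "K \<subseteq> C"
    using is_closest_cl[OF off_axis] unfolding K_def is_closest_def by blast
  have pK: "cl C x \<in> K" and qK: "q \<in> K"
    unfolding K_def using cl_of_mem(2)[OF qC] by (metis ends_in_segment image_eqI)+
  have comp: "K \<subseteq> connected_component_set C (cl C x)"
    by (rule connected_component_maximal[OF pK conn KC])
  have ball: "K - {q} \<subseteq> interior (cball x (dist x q))"
  proof
    fix c assume "c \<in> K - {q}"
    then obtain y where "y \<in> closed_segment x q" "c = cl C y" "c \<noteq> q"
      unfolding K_def by blast
    then show "c \<in> interior (cball x (dist x q))"
      using dist_cl_segment_less[OF _ qC off_axis] by simp
  qed
  show ?thesis
  proof (intro conjI allI impI)
    show "connected_component C (cl C x) q" using comp qK by blast
    fix g assume "simple_loop g \<and> path_image g = connected_component_set C (cl C x)"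
    then have "closed_arc g (cl C x) q \<subseteq> K \<or> closed_arc g q (cl C x) \<subseteq> K"
      using connected_subset_loop_contains_arc[OF _ _ conn pK qK] comp by blast
    then show "arc_co g (cl C x) q \<subseteq> interior (cball x (dist x q)) \<or>
               arc_oc g q (cl C x) \<subseteq> interior (cball x (dist x q))"
      unfolding arc_co_def arc_oc_def using ball by blast
  qed
qed

end
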